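(* For any direct signaling scheme $\pi$, the procedure CheckPersu$(\pi)$ returns True only if $\pi$ is persuasive, and returns False only if $\pi$ is not persuasive.
   Context: Model: state space $[m]$, common prior $\lambda\in\Delta([m])$, user actions $\{0,1\}$, user utility $\rho:[m]\times\{0,1\}\to\mathbb{R}$; $\omega(i)=(\rho(i,1)-\rho(i,0))\lambda(i)$. Standing assumptions: some state has $\omega(i)>0$ and $\sum_i\omega(i)<0$. In each round the platform commits to a signaling scheme, a state $\theta_t\sim\lambda$ and then a signal are drawn, and the user, who forms the Bayesian posterior, takes action 1 iff her posterior expected utility of action 1 is at least that of action 0. A direct signaling scheme has signals $\{0,1\}$ and sends signal 1 in state $i$ with probability $\pi(i)$; it is persuasive if the user takes action 1 whenever signal 1 is realized. Procedure CheckPersu$(\pi)$: in each successive round commit to $\pi$ and observe the realized signal $\sigma_t$ and action $a_t$; if $\sigma_t=1,a_t=1$ return True; if $\sigma_t=1,a_t=0$ return False; if $\sigma_t=0,a_t=1$ return False; otherwise go to the next round; if no rounds remain return round-exhausted. *)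

theory Defs
  imports Complex_Main
begin

text \<open>States are 0..<m, actions and signals are the naturals 0 and 1.
  lam is the prior, rho the user utility, sch a direct signaling scheme
  (sch i = probability of sending signal 1 in state i).\<close>

definition omega :: "(nat \<Rightarrow> real) \<Rightarrow> (nat \<Rightarrow> nat \<Rightarrow> real) \<Rightarrow> nat \<Rightarrow> real" where
  "omega lam rho i = (rho i 1 - rho i 0) * lam i"

definition is_prior :: "nat \<Rightarrow> (nat \<Rightarrow> real) \<Rightarrow> bool" where
  "is_prior m lam \<longleftrightarrow> (\<forall>i<m. 0 \<le> lam i) \<and> (\<Sum>i<m. lam i) = 1"

definition direct_scheme :: "nat \<Rightarrow> (nat \<Rightarrow> real) \<Rightarrow> bool" where
  "direct_scheme m sch \<longleftrightarrow> (\<forall>i<m. 0 \<le> sch i \<and> sch i \<le> 1)"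

definition sig_prob :: "(nat \<Rightarrow> real) \<Rightarrow> nat \<Rightarrow> nat \<Rightarrow> real" where
  "sig_prob sch s i = (if s = 1 then sch i else 1 - sch i)"

definition prob_signal :: "nat \<Rightarrow> (nat \<Rightarrow> real) \<Rightarrow> (nat \<Rightarrow> real) \<Rightarrow> nat \<Rightarrow> real" where
  "prob_signal m lam sch s = (\<Sum>i<m. lam i * sig_prob sch s i)"

definition posterior :: "nat \<Rightarrow> (nat \<Rightarrow> real) \<Rightarrow> (nat \<Rightarrow> real) \<Rightarrow> nat \<Rightarrow> nat \<Rightarrow> real" where
  "posterior m lam sch s i = lam i * sig_prob sch s i / prob_signal m lam sch s"

definition user_action ::
  "nat \<Rightarrow> (nat \<Rightarrow> real) \<Rightarrow> (nat \<Rightarrow> nat \<Rightarrow> real) \<Rightarrow> (nat \<Rightarrow> real) \<Rightarrow> nat \<Rightarrow> nat" where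
  "user_action m lam rho sch s =
     (if (\<Sum>i<m. posterior m lam sch s i * rho i 1) \<ge> (\<Sum>i<m. posterior m lam sch s i * rho i 0)
      then 1 else 0)"

definition persuasive ::
  "nat \<Rightarrow> (nat \<Rightarrow> real) \<Rightarrow> (nat \<Rightarrow> nat \<Rightarrow> real) \<Rightarrow> (nat \<Rightarrow> real) \<Rightarrow> bool" where
  "persuasive m lam rho sch \<longleftrightarrow>
     (prob_signal m lam sch 1 > 0 \<longrightarrow> user_action m lam rho sch 1 = 1)"

datatype check_result = Ret_True | Ret_False | Round_Exhausted

fun check_obs :: "(nat \<times> nat) list \<Rightarrow> check_result" where
  "check_obs [] = Round_Exhausted"
| "check_obs ((s, a) # rest) =
     (if s = 1 \<and> a = 1 then Ret_True
      else if s = 1 \<and> a = 0 then Ret_False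
      else if s = 0 \<and> a = 1 then Ret_False
      else check_obs rest)"

text \<open>CheckPersu(sch) given the realized (state, signal) pairs of the rounds;
  the action in each round is the user's Bayesian best response.\<close>
definition check_persu ::
  "nat \<Rightarrow> (nat \<Rightarrow> real) \<Rightarrow> (nat \<Rightarrow> nat \<Rightarrow> real) \<Rightarrow> (nat \<Rightarrow> real) \<Rightarrow> (nat \<times> nat) list \<Rightarrow> check_result" where
  "check_persu m lam rho sch rounds =
     check_obs (map (\<lambda>(\<theta>, s). (s, user_action m lam rho sch s)) rounds)"

definition realizable_round :: "nat \<Rightarrow> (nat \<Rightarrow> real) \<Rightarrow> (nat \<Rightarrow> real) \<Rightarrow> nat \<times> nat \<Rightarrow> bool" where
  "realizable_round m lam sch r \<longleftrightarrow>
     (case r of (\<theta>, s) \<Rightarrow> \<theta> < m \<and> lam \<theta> > 0 \<and> s \<in> {0, 1} \<and> sig_prob sch s \<theta> > 0)"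

end

theory Submission
  imports Defs
begin

text \<open>After signal \<open>s\<close> the user prefers action 1 exactly when \<open>\<Sum>\<^sub>i \<omega>(i) \<pi>\<^sub>s(i) \<ge> 0\<close>,
  where \<open>\<pi>\<^sub>s(i)\<close> is the probability of \<open>s\<close> in state \<open>i\<close>; the posterior only rescales this sum
  by the positive factor \<open>1 / P(s)\<close>. So action 1 after a realized signal 0 gives
  \<open>\<Sum>\<^sub>i \<omega>(i) \<pi>\<^sub>0(i) \<ge> 0\<close>, and since the two sums add up to \<open>\<Sum>\<^sub>i \<omega>(i) < 0\<close>,
  \<open>\<Sum>\<^sub>i \<omega>(i) \<pi>\<^sub>1(i) < 0\<close>: signal 1 then has positive probability and is answered by
  action 0.\<close>

lemma check_obs_Ret_True_imp: "check_obs xs = Ret_True \<Longrightarrow> (1, 1) \<in> set xs"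
  by (induction xs rule: check_obs.induct) (auto split: if_splits)

lemma check_obs_Ret_False_imp:
  "check_obs xs = Ret_False \<Longrightarrow> (1, 0) \<in> set xs \<or> (0, 1) \<in> set xs"
  by (induction xs rule: check_obs.induct) (auto split: if_splits)

lemma sig_prob_nonneg: "direct_scheme m sch \<Longrightarrow> i < m \<Longrightarrow> 0 \<le> sig_prob sch s i"
  by (simp add: direct_scheme_def sig_prob_def)

lemma prob_signal_pos_if_realizable:
  assumes "is_prior m lam" "direct_scheme m sch" "realizable_round m lam sch (\<theta>, s)"
  shows "prob_signal m lam sch s > 0"
proof -
  have \<theta>: "\<theta> < m" "0 < lam \<theta> * sig_prob sch s \<theta>"
    using assms(3) by (auto simp: realizable_round_def)
  have "lam \<theta> * sig_prob sch s \<theta> \<le> (\<Sum>i<m. lam i * sig_prob sch s i)"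
    using \<theta>(1) assms(1,2) by (intro member_le_sum) (auto simp: is_prior_def sig_prob_nonneg)
  then show ?thesis
    using \<theta>(2) by (simp add: prob_signal_def)
qed

lemma prob_signal_pos_if_sum_omega_nonzero:
  assumes "is_prior m lam" "direct_scheme m sch"
    and "(\<Sum>i<m. omega lam rho i * sig_prob sch s i) \<noteq> 0"
  shows "prob_signal m lam sch s > 0"
proof (rule ccontr)
  assume "\<not> prob_signal m lam sch s > 0"
  moreover have nonneg: "\<forall>i\<in>{..<m}. 0 \<le> lam i * sig_prob sch s i"
    using assms(1,2) by (auto simp: is_prior_def sig_prob_nonneg)
  moreover have "0 \<le> (\<Sum>i<m. lam i * sig_prob sch s i)"
    using nonneg by (intro sum_nonneg) auto
  ultimately have "(\<Sum>i<m. lam i * sig_prob sch s i) = 0"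
    unfolding prob_signal_def by linarith
  then have "\<forall>i\<in>{..<m}. lam i * sig_prob sch s i = 0"
    using nonneg sum_nonneg_eq_0_iff[of "{..<m}" "\<lambda>i. lam i * sig_prob sch s i"] by simp
  then have "(\<Sum>i<m. omega lam rho i * sig_prob sch s i) = 0"
    by (auto simp: omega_def intro!: sum.neutral)
  with assms(3) show False by contradiction
qed

lemma user_action_eq_1_iff:
  assumes "prob_signal m lam sch s > 0"
  shows "user_action m lam rho sch s = 1 \<longleftrightarrow> 0 \<le> (\<Sum>i<m. omega lam rho i * sig_prob sch s i)"
proof -
  have "(\<Sum>i<m. posterior m lam sch s i * rho i 1) - (\<Sum>i<m. posterior m lam sch s i * rho i 0)
      = (\<Sum>i<m. omega lam rho i * sig_prob sch s i) / prob_signal m lam sch s"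
    unfolding sum_subtractf[symmetric] sum_divide_distrib posterior_def omega_def
    by (rule sum.cong) (simp_all add: diff_divide_distrib[symmetric] algebra_simps)
  then have "(\<Sum>i<m. posterior m lam sch s i * rho i 0) \<le> (\<Sum>i<m. posterior m lam sch s i * rho i 1)
      \<longleftrightarrow> 0 \<le> (\<Sum>i<m. omega lam rho i * sig_prob sch s i) / prob_signal m lam sch s"
    by linarith
  also have "\<dots> \<longleftrightarrow> 0 \<le> (\<Sum>i<m. omega lam rho i * sig_prob sch s i)"
    using assms by (simp add: zero_le_divide_iff)
  finally show ?thesis
    by (simp add: user_action_def)
qed

lemma sum_omega_sig_prob_0_plus_1:
  "(\<Sum>i<m. omega lam rho i * sig_prob sch 0 i) + (\<Sum>i<m. omega lam rho i * sig_prob sch 1 i)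
     = (\<Sum>i<m. omega lam rho i)"
  unfolding sum.distrib[symmetric] by (rule sum.cong) (auto simp: sig_prob_def algebra_simps)

lemma not_persuasive_if_action_1_on_signal_0:
  assumes "is_prior m lam" "(\<Sum>i<m. omega lam rho i) < 0" "direct_scheme m sch"
    and "prob_signal m lam sch 0 > 0" "user_action m lam rho sch 0 = 1"
  shows "\<not> persuasive m lam rho sch"
proof -
  have "0 \<le> (\<Sum>i<m. omega lam rho i * sig_prob sch 0 i)"
    using user_action_eq_1_iff[OF assms(4)] assms(5) by simp
  then have neg: "(\<Sum>i<m. omega lam rho i * sig_prob sch 1 i) < 0"
    using assms(2) sum_omega_sig_prob_0_plus_1[of lam rho sch m] by linarith
  then have signal_1: "prob_signal m lam sch 1 > 0"
    by (intro prob_signal_pos_if_sum_omega_nonzero[OF assms(1,3), of rho]) simp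
  then have "user_action m lam rho sch 1 \<noteq> 1"
    by (subst user_action_eq_1_iff[OF signal_1]) (use neg in linarith)
  with signal_1 show ?thesis
    by (simp add: persuasive_def)
qed

theorem mainTheorem4:
  fixes m :: nat and lam :: "nat \<Rightarrow> real" and rho :: "nat \<Rightarrow> nat \<Rightarrow> real"
    and sch :: "nat \<Rightarrow> real" and rounds :: "(nat \<times> nat) list"
  assumes "is_prior m lam"
    and "\<exists>i<m. omega lam rho i > 0"
    and "(\<Sum>i<m. omega lam rho i) < 0"
    and "direct_scheme m sch"
    and "\<forall>r\<in>set rounds. realizable_round m lam sch r"
  shows "(check_persu m lam rho sch rounds = Ret_True \<longrightarrow> persuasive m lam rho sch)
       \<and> (check_persu m lam rho sch rounds = Ret_False \<longrightarrow> \<not> persuasive m lam rho sch)"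
proof safe
  assume "check_persu m lam rho sch rounds = Ret_True"
  then have "user_action m lam rho sch 1 = 1"
    unfolding check_persu_def by (auto dest!: check_obs_Ret_True_imp)
  then show "persuasive m lam rho sch"
    by (simp add: persuasive_def)
next
  assume "check_persu m lam rho sch rounds = Ret_False" and persuasive: "persuasive m lam rho sch"
  then obtain \<theta> s where round: "(\<theta>, s) \<in> set rounds"
    and action: "s = 1 \<and> user_action m lam rho sch 1 = 0 \<or> s = 0 \<and> user_action m lam rho sch 0 = 1"
    unfolding check_persu_def by (auto dest!: check_obs_Ret_False_imp)
  have realized: "prob_signal m lam sch s > 0"
    using prob_signal_pos_if_realizable[OF assms(1,4)] round assms(5) by blast
  from action show False
  proof
    assume "s = 1 \<and> user_action m lam rho sch 1 = 0"
    with realized persuasive show False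
      by (simp add: persuasive_def)
  next
    assume "s = 0 \<and> user_action m lam rho sch 0 = 1"
    with realized persuasive show False
      using not_persuasive_if_action_1_on_signal_0[OF assms(1,3,4)] by simp
  qed
qed

end
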